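(* For all integers $n\ge 4$ and $2\le k\le n/2$, there exists a feasible simple homogeneous PV graph $\vec G_R$ with $n$ sites and $k$ carriers such that $$\mathcal M(\vec G_R)\ >\ \tfrac18\,k\,n\,(n-8).$$ (This holds even though the agent knows $\vec G_R$ and $k$ and has unlimited memory.)
   Context: A PV (periodically varying) system consists of a finite set $S$ of $n$ sites and a set $C$ of $k\le n$ carriers. Each carrier $c$ has a route $\pi(c)=\langle x_0,\dots,x_{p(c)-1}\rangle$, a finite sequence of sites of length $p(c)\ge1$ called its period; $\pi(c)[j]=x_{j\bmod p(c)}$. At each time $t\in\mathbb N$ carrier $c$ is at $\pi(c)[t]$ and moves to $\pi(c)[t+1]$. The PV graph $\vec G_R$ is the directed edge-labelled multigraph on $S$ with edges $(x_i,x_{i+1},i)$, $0\le i<p(c)$, for every carrier. The system is homogeneous if all $p(c)$ are equal, heterogeneous otherwise. A route is simple if $\pi(c)[i]\ne\pi(c)[i+1]$ for all $i$ and, whenever $\pi(c)[i]=\pi(c)[j]$ with $0\le i<j<p(c)$, then $\pi(c)[i+1]\ne\pi(c)[j+1]$ (no self-loops and no repeated directed edge within one period); a PV graph is simple if all its routes are simple. An exploring agent is injected at time $0$ at a site of $\mathrm{start}(\vec G_R)=\{\pi(c)[0]:c\in C\}$; if at time $t$ it is at site $x$ it must either ride one step with some carrier $c$ with $\pi(c)[t]=x$ (one move) or halt; it cannot wait. A strategy solves PVG-Exploration of $\vec G_R$ if from every injection site the agent visits all sites and halts in finite time. $\vec G_R$ is feasible if from the starting point of every carrier some realizable walk visits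 all sites. For feasible $\vec G_R$, $\mathcal M(\vec G_R)$ denotes the minimum, over all deterministic strategies solving PVG-Exploration of $\vec G_R$ (which may use full knowledge of $\vec G_R$ and unlimited memory), of the maximum over injection sites of the number of moves performed. *)

theory Defs
  imports Complex_Main
begin

text \<open>A PV system with sites {0..<n} and carriers {0..<k}; R c is the route
  (list of sites, its length is the period p(c)) of carrier c.\<close>

type_synonym routes = "nat \<Rightarrow> nat list"

definition pos :: "routes \<Rightarrow> nat \<Rightarrow> nat \<Rightarrow> nat" where
  "pos R c t = R c ! (t mod length (R c))"

definition pv_system :: "nat \<Rightarrow> nat \<Rightarrow> routes \<Rightarrow> bool" where
  "pv_system n k R \<longleftrightarrow> 1 \<le> k \<and> k \<le> n \<and>
     (\<forall>c<k. R c \<noteq> [] \<and> set (R c) \<subseteq> {0..<n})"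

definition homogeneous :: "nat \<Rightarrow> routes \<Rightarrow> bool" where
  "homogeneous k R \<longleftrightarrow> (\<forall>c<k. \<forall>d<k. length (R c) = length (R d))"

definition simple_route :: "nat list \<Rightarrow> bool" where
  "simple_route r \<longleftrightarrow> (let p = length r in
     (\<forall>i<p. r ! i \<noteq> r ! ((i+1) mod p)) \<and>
     (\<forall>i j. i < j \<and> j < p \<and> r ! i = r ! j \<longrightarrow> r ! ((i+1) mod p) \<noteq> r ! ((j+1) mod p)))"

definition simple_pv :: "nat \<Rightarrow> routes \<Rightarrow> bool" where
  "simple_pv k R \<longleftrightarrow> (\<forall>c<k. simple_route (R c))"

definition start_sites :: "nat \<Rightarrow> routes \<Rightarrow> nat set" where
  "start_sites k R = {pos R c 0 | c. c < k}"

text \<open>A realizable walk from x: a list of carriers ridden at times 0,1,2,...\<close>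
definition walk :: "nat \<Rightarrow> routes \<Rightarrow> nat \<Rightarrow> nat list \<Rightarrow> bool" where
  "walk k R x cs \<longleftrightarrow> (\<forall>i<length cs. cs ! i < k \<and>
      pos R (cs ! i) i = (if i = 0 then x else pos R (cs ! (i - 1)) i))"

definition walk_sites :: "routes \<Rightarrow> nat \<Rightarrow> nat list \<Rightarrow> nat set" where
  "walk_sites R x cs = insert x {pos R (cs ! i) (i + 1) | i. i < length cs}"

definition feasible :: "nat \<Rightarrow> nat \<Rightarrow> routes \<Rightarrow> bool" where
  "feasible n k R \<longleftrightarrow> (\<forall>x\<in>start_sites k R. \<exists>cs. walk k R x cs \<and> {0..<n} \<subseteq> walk_sites R x cs)"

text \<open>A deterministic strategy maps the history (sites visited so far, starting
  with the injection site; the current time is its length minus one) to a decision: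
  None = halt, Some c = ride carrier c for one step.  It may depend arbitrarily on
  R, k, n (full knowledge, unlimited memory).\<close>
type_synonym strategy = "nat list \<Rightarrow> nat option"

fun run :: "strategy \<Rightarrow> routes \<Rightarrow> nat \<Rightarrow> nat \<Rightarrow> nat list" where
  "run s R x 0 = [x]"
| "run s R x (Suc t) = (let h = run s R x t in
     case s h of None \<Rightarrow> h | Some c \<Rightarrow> h @ [pos R c (length h)])"

definition solves :: "nat \<Rightarrow> nat \<Rightarrow> routes \<Rightarrow> strategy \<Rightarrow> bool" where
  "solves n k R s \<longleftrightarrow> (\<forall>x\<in>start_sites k R.
      (\<forall>t. case s (run s R x t) of None \<Rightarrow> True
            | Some c \<Rightarrow> c < k \<and> pos R c (length (run s R x t) - 1) = last (run s R x t)) \<and>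
      (\<exists>T. s (run s R x T) = None \<and> {0..<n} \<subseteq> set (run s R x T)))"

definition moves :: "strategy \<Rightarrow> routes \<Rightarrow> nat \<Rightarrow> nat" where
  "moves s R x = (LEAST m. s (run s R x m) = None)"

definition M :: "nat \<Rightarrow> nat \<Rightarrow> routes \<Rightarrow> nat" where
  "M n k R = (LEAST m. \<exists>s. solves n k R s \<and> (\<forall>x\<in>start_sites k R. moves s R x \<le> m))"

end

theory Submission
  imports Defs
begin

(* For n \<ge> 8 put h = (n - 2) div 2
   and p = 2h\<^sup>2.  The base route (euler h) of period p is an Eulerian circuit of the complete
   bipartite digraph between {0..<h} and {h..<2h}.  Carrier c follows this circuit shifted by c
   modulo 2h (the "pool" sites), except at a few detour positions: carriers c and c + 1 both sit
   on the hub 2h at times congruent to p - 2 - 2c, and only the last carrier k - 1 ever visits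
   the target site 2h + 1 (time 0 mod p) and the site n - 1 (time 2 mod p).  The shifts and the
   bipartite structure make every route simple and ensure that two carriers share a site at the
   same time only at these hub meetings.  Hence an agent injected at the start of carrier 0 can
   switch between carriers c and c + 1 only at times congruent to p - 2 - 2c; reaching the target costs
   at least (k - 1)(p - 2) + 1 moves, which exceeds k n (n - 8) / 8.  Ascending greedily through
   the carriers shows that the instance is feasible.  For n < 8 the claimed bound is negative. *)


section \<open>Strategies versus realizable walks\<close>

lemma run_stable:
  assumes "m \<le> t" and "s (run s R x m) = None"
  shows "run s R x t = run s R x m"
  using assms(1)
proof (induction t rule: dec_induct)
  case (step t) then show ?case using assms(2) by (simp add: Let_def)
qed simp

lemma run_explicit:
  assumes "\<forall>i<t. s (run s R x i) \<noteq> None"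
  shows "run s R x t = x # map (\<lambda>i. pos R (the (s (run s R x i))) (i + 1)) [0..<t]"
  using assms
proof (induction t)
  case (Suc t)
  have IH: "run s R x t = x # map (\<lambda>i. pos R (the (s (run s R x i))) (i + 1)) [0..<t]"
    using Suc by simp
  obtain c where "s (run s R x t) = Some c" using Suc.prems by blast
  then show ?case using IH by (simp add: Let_def)
qed simp

lemma solving_strategy_walk:
  assumes sol: "solves n k R s" and x: "x \<in> start_sites k R"
  shows "\<exists>cs. walk k R x cs \<and> {0..<n} \<subseteq> walk_sites R x cs \<and> length cs = moves s R x"
proof -
  obtain T where T: "s (run s R x T) = None" "{0..<n} \<subseteq> set (run s R x T)"
    using sol x unfolding solves_def by blast
  define m where "m = moves s R x"
  have halt: "s (run s R x m) = None" unfolding m_def moves_def using T(1) by (rule LeastI)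
  have mT: "m \<le> T" unfolding m_def moves_def using T(1) by (rule Least_le)
  have active: "s (run s R x i) \<noteq> None" if "i < m" for i
    using that not_less_Least unfolding m_def moves_def by blast
  define cc where "cc i = the (s (run s R x i))" for i
  define cs where "cs = map cc [0..<m]"
  have run_eq: "run s R x i = x # map (\<lambda>j. pos R (cc j) (j + 1)) [0..<i]" if "i \<le> m" for i
    unfolding cc_def using that active by (intro run_explicit) auto
  have "walk k R x cs"
    unfolding walk_def
  proof (intro allI impI)
    fix i assume "i < length cs"
    then have i: "i < m" by (simp add: cs_def)
    have "case s (run s R x i) of None \<Rightarrow> True
        | Some c \<Rightarrow> c < k \<and> pos R c (length (run s R x i) - 1) = last (run s R x i)"
      using sol x unfolding solves_def by blast
    then have "cc i < k \<and> pos R (cc i) i = last (run s R x i)"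
      using active[OF i] run_eq[of i] i by (auto simp: cc_def)
    moreover have "last (run s R x i) = (if i = 0 then x else pos R (cc (i - 1)) i)"
      using run_eq[of i] i by (cases i) auto
    ultimately show "cs ! i < k \<and> pos R (cs ! i) i = (if i = 0 then x else pos R (cs ! (i - 1)) i)"
      using i by (simp add: cs_def)
  qed
  moreover have "walk_sites R x cs = set (run s R x m)"
    by (force simp: walk_sites_def cs_def run_eq)
  moreover have "run s R x T = run s R x m"
    using run_stable[where s=s and R=R and x=x, OF mT halt] .
  ultimately show ?thesis using T(2) by (intro exI[of _ cs]) (simp add: cs_def m_def)
qed

definition chosen_walk :: "nat \<Rightarrow> nat \<Rightarrow> routes \<Rightarrow> nat \<Rightarrow> nat list" where
  "chosen_walk n k R x = (SOME cs. walk k R x cs \<and> {0..<n} \<subseteq> walk_sites R x cs)"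

definition replay :: "nat \<Rightarrow> nat \<Rightarrow> routes \<Rightarrow> strategy" where
  "replay n k R hist =
     (if length hist - 1 < length (chosen_walk n k R (hd hist))
      then Some (chosen_walk n k R (hd hist) ! (length hist - 1)) else None)"

lemma chosen_walk_covers:
  assumes "feasible n k R" and "x \<in> start_sites k R"
  shows "walk k R x (chosen_walk n k R x) \<and> {0..<n} \<subseteq> walk_sites R x (chosen_walk n k R x)"
proof -
  have "\<exists>cs. walk k R x cs \<and> {0..<n} \<subseteq> walk_sites R x cs"
    using assms unfolding feasible_def by blast
  then show ?thesis unfolding chosen_walk_def by (rule someI_ex)
qed

lemma run_replay:
  "run (replay n k R) R x t =
     x # map (\<lambda>i. pos R (chosen_walk n k R x ! i) (i + 1)) [0..<min t (length (chosen_walk n k R x))]"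
proof (induction t)
  case (Suc t)
  let ?cs = "chosen_walk n k R x"
  show ?case
  proof (cases "t < length ?cs")
    case True
    then have "run (replay n k R) R x t = x # map (\<lambda>i. pos R (?cs ! i) (i + 1)) [0..<t]"
      using Suc.IH by (simp add: min_def)
    moreover from this have "replay n k R (run (replay n k R) R x t) = Some (?cs ! t)"
      using True by (simp add: replay_def)
    ultimately show ?thesis using True by (simp add: min_def)
  next
    case False
    then have "run (replay n k R) R x t = x # map (\<lambda>i. pos R (?cs ! i) (i + 1)) [0..<length ?cs]"
      using Suc.IH by (simp add: min_def)
    moreover from this have "replay n k R (run (replay n k R) R x t) = None"
      using False by (simp add: replay_def)
    ultimately show ?thesis using False by (simp add: min_def)
  qed
qed simp

lemma replay_solves:
  assumes feas: "feasible n k R"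
  shows "solves n k R (replay n k R)"
  unfolding solves_def
proof (intro ballI conjI allI)
  fix x t assume x: "x \<in> start_sites k R"
  let ?s = "replay n k R" and ?cs = "chosen_walk n k R x"
  show "case ?s (run ?s R x t) of None \<Rightarrow> True
          | Some c \<Rightarrow> c < k \<and> pos R c (length (run ?s R x t) - 1) = last (run ?s R x t)"
  proof (cases "t < length ?cs")
    case True
    then have s: "?s (run ?s R x t) = Some (?cs ! t)" by (simp add: replay_def run_replay)
    have "?cs ! t < k \<and> pos R (?cs ! t) t = (if t = 0 then x else pos R (?cs ! (t - 1)) t)"
      using chosen_walk_covers[OF feas x] True unfolding walk_def by blast
    moreover have "last (run ?s R x t) = (if t = 0 then x else pos R (?cs ! (t - 1)) t)"
      using True by (cases t) (auto simp del: run.simps simp add: run_replay min_def)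
    ultimately show ?thesis using s True by (simp add: run_replay min_def)
  next
    case False
    then show ?thesis by (simp add: replay_def run_replay min_def)
  qed
next
  fix x assume x: "x \<in> start_sites k R"
  let ?s = "replay n k R" and ?L = "length (chosen_walk n k R x)"
  have "?s (run ?s R x ?L) = None" by (simp add: replay_def run_replay)
  moreover have "set (run ?s R x ?L) = walk_sites R x (chosen_walk n k R x)"
    by (auto simp: run_replay walk_sites_def)
  ultimately show "\<exists>T. ?s (run ?s R x T) = None \<and> {0..<n} \<subseteq> set (run ?s R x T)"
    using chosen_walk_covers[OF feas x] by metis
qed

lemma replay_moves: "moves (replay n k R) R x \<le> length (chosen_walk n k R x)"
  unfolding moves_def by (rule Least_le) (simp add: replay_def run_replay)

(* A feasible system admits a solving strategy with a uniform bound on the number of moves,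
   so the minimum defining M is attained. *)
lemma feasible_solvable:
  assumes "feasible n k R"
  shows "\<exists>s m. solves n k R s \<and> (\<forall>x\<in>start_sites k R. moves s R x \<le> m)"
proof -
  have "start_sites k R = (\<lambda>c. pos R c 0) ` {..<k}" by (auto simp: start_sites_def)
  then have "finite (start_sites k R)" by simp
  then have "\<forall>x\<in>start_sites k R.
      moves (replay n k R) R x \<le> Max ((\<lambda>x. length (chosen_walk n k R x)) ` start_sites k R)"
    using replay_moves by (meson Max_ge finite_imageI image_eqI le_trans)
  then show ?thesis using replay_solves[OF assms] by blast
qed

lemma M_lower_bound:
  assumes feas: "feasible n k R" and x: "x \<in> start_sites k R"
    and long: "\<And>cs. walk k R x cs \<Longrightarrow> {0..<n} \<subseteq> walk_sites R x cs \<Longrightarrow> B \<le> length cs"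
  shows "B \<le> M n k R"
proof -
  let ?P = "\<lambda>m. \<exists>s. solves n k R s \<and> (\<forall>x\<in>start_sites k R. moves s R x \<le> m)"
  have "\<exists>m. ?P m" using feasible_solvable[OF feas] by blast
  then have "?P (M n k R)" unfolding M_def by (rule LeastI_ex)
  then obtain s where sol: "solves n k R s" and bound: "moves s R x \<le> M n k R"
    using x by blast
  obtain cs where "walk k R x cs" "{0..<n} \<subseteq> walk_sites R x cs" "length cs = moves s R x"
    using solving_strategy_walk[OF sol x] by blast
  then show ?thesis using long bound by (metis le_trans)
qed


lemma mod_shift_inj:
  fixes x c d m :: nat
  assumes e: "(x + c) mod m = (x + d) mod m" and cd: "c < m" "d < m"
  shows "c = d"
proof -
  let ?a = "x mod m"
  have a: "?a < m" using cd by simp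
  have small: "y mod m = (if y < m then y else y - m)" if "y < 2 * m" for y
    using that by (simp add: le_mod_geq)
  have "(?a + c) mod m = (?a + d) mod m" using e by (metis mod_add_left_eq)
  then show "c = d" using small[of "?a + c"] small[of "?a + d"] a cd by (auto split: if_splits)
qed

lemma mod_add_two_neq: "2 < m \<Longrightarrow> (d::nat) mod m \<noteq> (d + 2) mod m"
  using mod_shift_inj[of d 0 m 2] by auto

lemma succ_mod_inj: "i < p \<Longrightarrow> j < (p::nat) \<Longrightarrow> (i + 1) mod p = (j + 1) mod p \<Longrightarrow> i = j"
  by (metis Suc_eq_plus1 Suc_lessI add_right_cancel mod_less mod_self nat.distinct(1) zero_less_Suc)

lemma div_mod_eq_imp_eq: "(x::nat) div m = y div m \<Longrightarrow> x mod m = y mod m \<Longrightarrow> x = y"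
  by (metis div_mult_mod_eq)

lemma hit_residue:
  fixes p r i :: nat
  assumes r: "r < p"
  shows "\<exists>s. i < s \<and> s \<le> i + p \<and> s mod p = r"
proof -
  let ?q = "i div p" and ?m = "i mod p"
  have i: "?q * p + ?m = i" by simp
  have m: "?m < p" using r by simp
  show ?thesis
  proof (cases "?m < r")
    case True
    have "i < ?q * p + r" "?q * p + r \<le> i + p" using True r i by linarith+
    moreover have "(?q * p + r) mod p = r" using r by simp
    ultimately show ?thesis by blast
  next
    case False
    have e: "?q * p + p + r = r + Suc ?q * p" by simp
    have "(?q * p + p + r) mod p = r" unfolding e using r by (simp only: mod_mult_self1 mod_less)
    moreover have "i < ?q * p + p + r" "?q * p + p + r \<le> i + p" using False r m i by linarith+
    ultimately show ?thesis by blast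
  qed
qed

lemma meeting_time_arith:
  fixes c i P :: nat
  assumes a: "c * (P - 2) \<le> i" and b: "(i + 1) mod P = P - 2 - 2 * c" and c: "2 * c + 2 \<le> P"
  shows "(c + 1) * (P - 2) \<le> i + 1"
proof -
  define q where "q = (i + 1) div P"
  have e: "i + 1 = q * P + (P - 2 - 2 * c)" using b by (metis q_def div_mult_mod_eq)
  have "c * P \<le> i + 2 * c" using a c by (simp add: diff_mult_distrib2 mult.commute)
  then have "c * P < (q + 1) * P" using e c by (simp add: algebra_simps)
  then have "c < q + 1" using mult_less_cancel2 by blast
  then have "c \<le> q" by simp
  then have cq: "c * P \<le> q * P" by (simp add: mult_le_mono1)
  have "(c + 1) * (P - 2) + 2 * c + 2 = c * P + P"
    using c by (simp add: algebra_simps diff_mult_distrib2)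
  moreover have "i + 1 + 2 * c + 2 = q * P + P" using e c by simp
  ultimately show ?thesis using cq by linarith
qed


section \<open>An Eulerian circuit of the complete bipartite digraph\<close>

(* Position i of the circuit: even positions run through the left vertices {0..<h}, each held
   for a block of 2h positions, odd positions through the right vertices {h..<2h}.  Over one
   period 2h\<^sup>2 every arc between the two sides is used exactly once in each direction. *)
definition euler :: "nat \<Rightarrow> nat \<Rightarrow> nat" where
  "euler h i = (if even i then i div (2 * h) else h + (i mod (2 * h)) div 2)"

lemma euler_even_lt: "even i \<Longrightarrow> i < 2 * h * h \<Longrightarrow> euler h i < h"
  by (simp add: euler_def less_mult_imp_div_less mult.commute)

lemma euler_odd: "odd i \<Longrightarrow> 0 < h \<Longrightarrow> h \<le> euler h i \<and> euler h i < 2 * h"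
proof -
  assume "odd i" "0 < h"
  then have "i mod (2 * h) < 2 * h" by simp
  then have "(i mod (2 * h)) div 2 < h" by linarith
  then show ?thesis using \<open>odd i\<close> by (simp add: euler_def)
qed

lemma euler_lt:
  assumes "i < 2 * h * h" and "0 < h"
  shows "euler h i < 2 * h"
proof (cases "even i")
  case True
  then show ?thesis using euler_even_lt[OF True assms(1)] by linarith
qed (use euler_odd assms in blast)

lemma euler_parity:
  "0 < h \<Longrightarrow> i < 2 * h * h \<Longrightarrow> j < 2 * h * h \<Longrightarrow> euler h i = euler h j \<Longrightarrow> even i = even j"
  using euler_even_lt euler_odd by (metis not_le)

lemma euler_odd_inj:
  assumes "odd i" "odd j" "0 < h" "euler h i = euler h j"
  shows "i mod (2 * h) = j mod (2 * h)"
proof -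
  have e: "(i mod (2 * h)) div 2 = (j mod (2 * h)) div 2" using assms by (simp add: euler_def)
  have "odd (i mod (2 * h))" "odd (j mod (2 * h))"
    using assms by (metis dvd_mod_iff dvd_triv_left)+
  then show ?thesis using e by (metis odd_two_times_div_two_succ)
qed

lemma even_succ_mod: "even (x::nat) \<Longrightarrow> (x + 1) mod (2 * h) = x mod (2 * h) + 1"
proof -
  assume "even x"
  then have "even (x mod (2 * h))" by (metis dvd_mod_iff dvd_triv_left)
  then have "Suc (x mod (2 * h)) \<noteq> 2 * h" by (metis even_Suc dvd_triv_left)
  then show ?thesis using mod_Suc[of x "2 * h"] by simp
qed

lemma euler_edge_inj_even:
  assumes h: "0 < h" and ij: "even i" "even j" "i < 2 * h * h" "j < 2 * h * h"
    and e1: "euler h i = euler h j" and e2: "euler h (i + 1) = euler h (j + 1)"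
  shows "i = j"
proof -
  have "(i + 1) mod (2 * h) = (j + 1) mod (2 * h)" using euler_odd_inj[OF _ _ h e2] ij by simp
  then have "i mod (2 * h) = j mod (2 * h)" using even_succ_mod ij by simp
  moreover have "i div (2 * h) = j div (2 * h)" using e1 ij by (simp add: euler_def)
  ultimately show "i = j" using div_mod_eq_imp_eq by blast
qed

lemma euler_edge_inj_odd:
  assumes h: "0 < h" and ij: "odd i" "odd j" "i < 2 * h * h" "j < 2 * h * h"
    and e1: "euler h i = euler h j"
    and e2: "euler h ((i + 1) mod (2 * h * h)) = euler h ((j + 1) mod (2 * h * h))"
  shows "i = j"
proof -
  let ?p = "2 * h * h"
  have "i mod (2 * h) = j mod (2 * h)" using euler_odd_inj[OF ij(1,2) h e1] .
  then have "(i + 1) mod (2 * h) = (j + 1) mod (2 * h)" by (metis mod_add_left_eq)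
  then have "((i + 1) mod ?p) mod (2 * h) = ((j + 1) mod ?p) mod (2 * h)"
    by (simp add: mod_mod_cancel)
  moreover have "even ((x + 1) mod ?p)" if "odd x" for x using that by (simp add: dvd_mod_iff)
  then have "((i + 1) mod ?p) div (2 * h) = ((j + 1) mod ?p) div (2 * h)"
    using e2 ij by (simp add: euler_def)
  ultimately have "(i + 1) mod ?p = (j + 1) mod ?p" using div_mod_eq_imp_eq by blast
  then show "i = j" using succ_mod_inj ij by blast
qed

lemma euler_edge_inj:
  assumes h: "0 < h" and ij: "i < j" "j < 2 * h * h"
    and e1: "euler h i = euler h j"
    and e2: "euler h ((i + 1) mod (2 * h * h)) = euler h ((j + 1) mod (2 * h * h))"
  shows False
proof -
  have i: "i < 2 * h * h" using ij by simp
  have par: "even i = even j" using euler_parity[OF h i ij(2) e1] .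
  show False
  proof (cases "even i")
    case True
    have ej: "even j" using True par by simp
    have "i + 1 \<noteq> 2 * h * h" "j + 1 \<noteq> 2 * h * h"
      using True ej by (metis dvd_triv_left even_plus_one_iff mult.assoc)+
    then have "i + 1 < 2 * h * h" "j + 1 < 2 * h * h" using ij by linarith+
    then have "euler h (i + 1) = euler h (j + 1)" using e2 by simp
    then show False using euler_edge_inj_even[OF h True ej i ij(2) e1] ij by simp
  next
    case False
    then have "odd j" using par by simp
    then show False using euler_edge_inj_odd[OF h False _ i ij(2) e1 e2] ij by simp
  qed
qed


section \<open>The construction\<close>

(* Sites are {0..<n}: the pool {0..<2h}, the hub 2h, the target 2h + 1 and the site n - 1
   (which coincides with the target when n is even).  All routes have period p = 2h\<^sup>2. *)
definition half :: "nat \<Rightarrow> nat" where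
  "half n = (n - 2) div 2"

definition period :: "nat \<Rightarrow> nat" where
  "period n = 2 * half n * half n"

(* Positions at which carrier c leaves the pool: the last carrier visits the target at 0 and
   n - 1 at 2; carrier c < k - 1 visits the hub at p - 2 - 2c, carrier c \<ge> 1 at p - 2c. *)
definition detour :: "nat \<Rightarrow> nat \<Rightarrow> nat \<Rightarrow> nat \<Rightarrow> bool" where
  "detour n k c i \<longleftrightarrow> (c = k - 1 \<and> (i = 0 \<or> i = 2)) \<or>
     (c < k - 1 \<and> i = period n - 2 - 2 * c) \<or> (1 \<le> c \<and> i = period n - 2 * c)"

definition hard_site :: "nat \<Rightarrow> nat \<Rightarrow> nat \<Rightarrow> nat \<Rightarrow> nat" where
  "hard_site n k c i =
     (if c = k - 1 \<and> i = 0 then 2 * half n + 1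
      else if c = k - 1 \<and> i = 2 then n - 1
      else if c < k - 1 \<and> i = period n - 2 - 2 * c then 2 * half n
      else if 1 \<le> c \<and> i = period n - 2 * c then 2 * half n
      else (euler (half n) i + c) mod (2 * half n))"

definition hard_routes :: "nat \<Rightarrow> nat \<Rightarrow> routes" where
  "hard_routes n k c = map (hard_site n k c) [0..<period n]"

locale hard_instance =
  fixes n k :: nat
  assumes n8: "8 \<le> n" and k2: "2 \<le> k" and kn: "2 * k \<le> n"
begin

abbreviation h :: nat where "h \<equiv> half n"
abbreviation p :: nat where "p \<equiv> period n"

lemma half_ge_3: "3 \<le> h" using n8 by (simp add: half_def)

lemma half_pos: "0 < h" using half_ge_3 by simp

lemma k_le_half: "k \<le> h + 1" using kn by (simp add: half_def)

lemma last_site_cases: "n - 1 = 2 * h + 1 \<or> n - 1 = 2 * h + 2"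
  using n8 by (simp add: half_def) presburger

lemma period_eq: "p = 2 * h * h" by (simp add: period_def)

lemma period_large: "2 * k + 10 \<le> p"
proof -
  have "3 * h \<le> h * h" using half_ge_3 by simp
  then have "2 * k + 10 \<le> 2 * (h * h)" using k_le_half half_ge_3 by linarith
  then show ?thesis by (simp add: period_eq mult.assoc)
qed

lemma period_even: "even p" by (simp add: period_def)

lemma period_pos: "0 < p" using period_large by simp

lemma period_arith: "c < k \<Longrightarrow> p - 2 * c = p - 2 - 2 * c + 2 \<and> 10 \<le> p - 2 - 2 * c \<and>
    p - 2 - 2 * c + 2 * c + 2 = p"
  using period_large by arith

lemma pos_hard: "pos (hard_routes n k) c t = hard_site n k c (t mod p)"
  unfolding pos_def hard_routes_def using period_pos by simp

lemma pool_site: "\<not> detour n k c i \<Longrightarrow> hard_site n k c i = (euler h i + c) mod (2 * h)"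
  by (auto simp: hard_site_def detour_def)

lemma detour_site: "detour n k c i \<Longrightarrow> 2 * h \<le> hard_site n k c i \<and> hard_site n k c i < n"
proof -
  assume "detour n k c i"
  then have "hard_site n k c i \<in> {2 * h, 2 * h + 1, n - 1}"
    unfolding hard_site_def detour_def by (auto split: if_split)
  then show ?thesis using last_site_cases n8 by auto
qed

lemma pool_site_lt: "\<not> detour n k c i \<Longrightarrow> hard_site n k c i < 2 * h"
  using pool_site half_pos by simp

lemma detour_iff_outside_pool: "detour n k c i \<longleftrightarrow> 2 * h \<le> hard_site n k c i"
  using detour_site pool_site_lt not_le by blast

lemma site_lt: "hard_site n k c i < n"
  using detour_site pool_site_lt last_site_cases by (cases "detour n k c i") force+

lemma detour_even: "c < k \<Longrightarrow> detour n k c i \<Longrightarrow> even i \<and> i + 2 \<le> p"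
  using period_even period_large unfolding detour_def by auto

lemma detour_odd: "c < k \<Longrightarrow> odd i \<Longrightarrow> \<not> detour n k c i"
  using detour_even by blast

lemma detour_cases:
  assumes c: "c < k" and d: "detour n k c i"
  shows "(c = k - 1 \<and> i = 0 \<and> hard_site n k c i = 2 * h + 1) \<or>
         (c = k - 1 \<and> i = 2 \<and> hard_site n k c i = n - 1) \<or>
         (c < k - 1 \<and> i = p - 2 - 2 * c \<and> hard_site n k c i = 2 * h) \<or>
         (1 \<le> c \<and> i = p - 2 * c \<and> hard_site n k c i = 2 * h)"
proof -
  have big: "10 \<le> p - 2 - 2 * c" "10 \<le> p - 2 * c" using period_large c by arith+
  show ?thesis
  proof (cases "c = k - 1")
    case True
    then have "i = 0 \<or> i = 2 \<or> (1 \<le> c \<and> i = p - 2 * c)" using d unfolding detour_def by auto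
    then show ?thesis using True big by (auto simp: hard_site_def)
  next
    case False
    then have "c < k - 1" and "i = p - 2 - 2 * c \<or> (1 \<le> c \<and> i = p - 2 * c)"
      using c d unfolding detour_def by auto
    then show ?thesis using big by (auto simp: hard_site_def)
  qed
qed

lemma detour_pair: "c < k \<Longrightarrow> detour n k c i \<Longrightarrow> detour n k c j \<Longrightarrow> i < j \<Longrightarrow>
    hard_site n k c i = hard_site n k c j \<Longrightarrow> j = i + 2"
  using detour_cases[of c i] detour_cases[of c j] last_site_cases period_arith[of c] by auto

lemma detour_meet:
  assumes cd: "c < d" "d < k" and dc: "detour n k c i" and dd: "detour n k d i"
    and e: "hard_site n k c i = hard_site n k d i"
  shows "d = c + 1 \<and> i = p - 2 - 2 * c"
proof -
  have "c \<noteq> k - 1" using cd by simp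
  then have ci: "i = p - 2 - 2 * c \<or> i = p - 2 * c"
    using detour_cases[of c i] cd dc by auto
  have di: "i = 0 \<or> i = 2 \<or> i = p - 2 - 2 * d \<or> i = p - 2 * d"
    using detour_cases[of d i] cd dd by auto
  have "A + 2 * c + 2 = P \<Longrightarrow> B + 2 * d + 2 = P \<Longrightarrow> 10 \<le> A \<Longrightarrow> 10 \<le> B \<Longrightarrow>
      i = A \<or> i = A + 2 \<Longrightarrow> i = 0 \<or> i = 2 \<or> i = B \<or> i = B + 2 \<Longrightarrow> d = c + 1 \<and> i = A"
    for A B P :: nat using cd by auto
  from this[of "p - 2 - 2 * c" p "p - 2 - 2 * d"] show ?thesis
    using ci di period_arith[of c] period_arith[of d] cd by auto
qed

lemma carriers_meet:
  assumes c: "c < k" and d: "d < k" and ne: "c \<noteq> d"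
    and e: "hard_site n k c i = hard_site n k d i"
  shows "(d = c + 1 \<and> i = p - 2 - 2 * c) \<or> (c = d + 1 \<and> i = p - 2 - 2 * d)"
proof (cases "detour n k c i")
  case False
  then have "\<not> detour n k d i" using e detour_iff_outside_pool by simp
  then have "(euler h i + c) mod (2 * h) = (euler h i + d) mod (2 * h)"
    using False e pool_site by simp
  moreover have "c < 2 * h" "d < 2 * h" using c d k_le_half half_ge_3 by linarith+
  ultimately show ?thesis using mod_shift_inj ne by blast
next
  case True
  then have "detour n k d i" using e detour_iff_outside_pool by simp
  then show ?thesis using detour_meet[of c d i] detour_meet[of d c i] True c d ne e by linarith
qed

end


section \<open>Every route is simple\<close>

context hard_instance begin

lemma succ_mod_lt: "(i + 1) mod p < p" using period_pos by simp

lemma succ_mod_parity: "i < p \<Longrightarrow> even ((i + 1) mod p) \<longleftrightarrow> odd i"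
proof (cases "i + 1 < p")
  case False
  assume "i < p"
  then have "i + 1 = p" using False by simp
  then show ?thesis using period_even by (metis even_add mod_self odd_one dvd_0_right)
qed simp

lemma pool_site_inj:
  assumes "\<not> detour n k c i" "\<not> detour n k c j" "i < p" "j < p"
    and "hard_site n k c i = hard_site n k c j"
  shows "euler h i = euler h j"
proof -
  have "euler h i < 2 * h" "euler h j < 2 * h" using euler_lt half_pos assms(3,4) period_eq by auto
  moreover have "(c + euler h i) mod (2 * h) = (c + euler h j) mod (2 * h)"
    using assms pool_site by (simp add: add.commute)
  ultimately show ?thesis using mod_shift_inj by blast
qed

(* Consecutive positions have different parities, so they never visit the same site. *)
lemma no_self_loop:
  assumes c: "c < k" and i: "i < p"
  shows "hard_site n k c i \<noteq> hard_site n k c ((i + 1) mod p)"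
proof
  assume e: "hard_site n k c i = hard_site n k c ((i + 1) mod p)"
  let ?j = "(i + 1) mod p"
  have par: "even ?j \<longleftrightarrow> odd i" using succ_mod_parity i by simp
  have "detour n k c i \<longleftrightarrow> detour n k c ?j" using e detour_iff_outside_pool by simp
  moreover have "\<not> (detour n k c i \<and> detour n k c ?j)" using detour_even c par by blast
  ultimately have "\<not> detour n k c i" "\<not> detour n k c ?j" by blast+
  then have "euler h i = euler h ?j" using pool_site_inj i e succ_mod_lt by blast
  then have "even i = even ?j" using euler_parity half_pos i succ_mod_lt period_eq by metis
  then show False using par by simp
qed

(* An arc starting at a detour: its two occurrences are the two hub times, two positions apart,
   and the odd positions right after them visit different right vertices of the circuit. *)
lemma repeated_edge_from_detour:
  assumes c: "c < k" and ij: "i < j" and di: "detour n k c i"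
    and e1: "hard_site n k c i = hard_site n k c j"
    and e2: "hard_site n k c ((i + 1) mod p) = hard_site n k c ((j + 1) mod p)"
  shows False
proof -
  have dj: "detour n k c j" using e1 di detour_iff_outside_pool by simp
  have j2: "j = i + 2" using detour_pair[OF c di dj ij e1] .
  have ei: "even i" "i + 2 \<le> p" "j + 2 \<le> p" using detour_even[OF c di] detour_even[OF c dj] by auto
  then have "hard_site n k c (i + 1) = hard_site n k c (j + 1)" using e2 by simp
  moreover have "odd (i + 1)" "odd (j + 1)" using ei j2 by auto
  moreover have "i + 1 < p" "j + 1 < p" using ei by auto
  ultimately have "euler h (i + 1) = euler h (j + 1)" using pool_site_inj detour_odd c by blast
  then have "(i + 1) mod (2 * h) = (i + 1 + 2) mod (2 * h)"
    using euler_odd_inj \<open>odd (i + 1)\<close> \<open>odd (j + 1)\<close> half_pos j2 by (simp add: algebra_simps)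
  then show False using mod_add_two_neq[of "2 * h"] half_ge_3 by simp
qed

(* An arc ending at a detour: both start positions are odd and congruent modulo 2h, so the two
   end positions are congruent modulo 2h as well, yet distinct hub times differ by 2. *)
lemma repeated_edge_into_detour:
  assumes c: "c < k" and ij: "i < j" "j < p"
    and ni: "\<not> detour n k c i" and nj: "\<not> detour n k c j"
    and di: "detour n k c ((i + 1) mod p)"
    and e1: "hard_site n k c i = hard_site n k c j"
    and e2: "hard_site n k c ((i + 1) mod p) = hard_site n k c ((j + 1) mod p)"
  shows False
proof -
  let ?i' = "(i + 1) mod p" and ?j' = "(j + 1) mod p"
  have dj: "detour n k c ?j'" using e2 di detour_iff_outside_pool by simp
  have ne: "?i' \<noteq> ?j'" using succ_mod_inj ij by (metis less_irrefl order.strict_trans)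
  have "even ?i'" "even ?j'" using detour_even c di dj by auto
  then have "odd i" "odd j" using succ_mod_parity ij by auto
  moreover have "euler h i = euler h j" using pool_site_inj[OF ni nj _ ij(2) e1] ij by simp
  ultimately have "i mod (2 * h) = j mod (2 * h)" using euler_odd_inj half_pos by blast
  then have "(i + 1) mod (2 * h) = (j + 1) mod (2 * h)" by (metis mod_add_left_eq)
  then have m: "?i' mod (2 * h) = ?j' mod (2 * h)" by (simp add: period_eq mod_mod_cancel)
  have "?j' = ?i' + 2 \<or> ?i' = ?j' + 2"
    using detour_pair[OF c di dj _ e2] detour_pair[OF c dj di _ e2[symmetric]] ne
    by (metis linorder_neqE_nat)
  moreover have two: "2 < 2 * h" using half_ge_3 by simp
  ultimately show False using m mod_add_two_neq[OF two, of ?i'] mod_add_two_neq[OF two, of ?j']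
    by auto
qed

lemma no_repeated_edge:
  assumes c: "c < k" and ij: "i < j" "j < p"
    and e1: "hard_site n k c i = hard_site n k c j"
    and e2: "hard_site n k c ((i + 1) mod p) = hard_site n k c ((j + 1) mod p)"
  shows False
proof (cases "detour n k c i")
  case True
  show False by (rule repeated_edge_from_detour[OF c ij(1) True e1 e2])
next
  case ni: False
  then have nj: "\<not> detour n k c j" using e1 detour_iff_outside_pool by simp
  show False
  proof (cases "detour n k c ((i + 1) mod p)")
    case True
    show False by (rule repeated_edge_into_detour[OF c ij ni nj True e1 e2])
  next
    case False
    then have "\<not> detour n k c ((j + 1) mod p)" using e2 detour_iff_outside_pool by simp
    then have "euler h ((i + 1) mod p) = euler h ((j + 1) mod p)"
      using pool_site_inj False e2 succ_mod_lt by blast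
    moreover have "euler h i = euler h j" using pool_site_inj[OF ni nj _ ij(2) e1] ij by simp
    ultimately show False using euler_edge_inj[OF half_pos ij(1)] ij(2) period_eq by simp
  qed
qed

lemma simple_hard_route: "c < k \<Longrightarrow> simple_route (hard_routes n k c)"
  unfolding simple_route_def hard_routes_def Let_def
  using no_self_loop no_repeated_edge succ_mod_lt by (auto simp del: upt_Suc)

end


section \<open>Feasibility\<close>

fun greedy :: "nat \<Rightarrow> nat \<Rightarrow> nat \<Rightarrow> nat \<Rightarrow> nat" where
  "greedy p k c0 0 = c0"
| "greedy p k c0 (Suc i) =
     (if greedy p k c0 i < k - 1 \<and> Suc i mod p = p - 2 - 2 * greedy p k c0 i
      then greedy p k c0 i + 1 else greedy p k c0 i)"

context hard_instance begin

lemma greedy_lt: "c0 < k \<Longrightarrow> greedy p k c0 i < k"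
  by (induction i) auto

lemma greedy_mono: "i \<le> j \<Longrightarrow> greedy p k c0 i \<le> greedy p k c0 j"
proof (induction j rule: dec_induct)
  case (step j)
  then show ?case by (simp add: le_SucI)
qed simp

lemma meeting_sites:
  assumes g: "g < k - 1"
  shows "hard_site n k g (p - 2 - 2 * g) = 2 * h \<and> hard_site n k (g + 1) (p - 2 - 2 * g) = 2 * h"
proof -
  have e: "p - 2 - 2 * g = p - 2 * (g + 1)" by simp
  have a: "detour n k g (p - 2 - 2 * g)" and b: "detour n k (g + 1) (p - 2 - 2 * g)"
    using g e by (simp_all add: detour_def)
  have "10 \<le> p - 2 - 2 * g" using period_arith[of g] g by auto
  moreover have "g < k" "g + 1 < k" using g by auto
  ultimately show ?thesis using detour_cases[OF _ a] detour_cases[OF _ b] g e by auto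
qed

(* Changing carrier in the greedy walk is always possible: both carriers are at the hub. *)
lemma greedy_step:
  "pos (hard_routes n k) (greedy p k c0 (Suc i)) (Suc i) =
   pos (hard_routes n k) (greedy p k c0 i) (Suc i)"
  using meeting_sites[of "greedy p k c0 i"] by (auto simp: pos_hard)

lemma greedy_progress:
  assumes g: "greedy p k c0 i < k - 1"
  shows "greedy p k c0 i + 1 \<le> greedy p k c0 (i + p)"
proof -
  let ?g = "greedy p k c0 i"
  obtain s where s: "i < s" "s \<le> i + p" "s mod p = p - 2 - 2 * ?g"
    using hit_residue[of "p - 2 - 2 * ?g" p i] period_pos by auto
  obtain s' where s': "s = Suc s'" using s(1) by (cases s) auto
  have "?g \<le> greedy p k c0 s'" using greedy_mono s s' by simp
  then have "?g + 1 \<le> greedy p k c0 s" using s s' g by auto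
  then show ?thesis using greedy_mono[OF s(2), of c0] by simp
qed

lemma greedy_reach: "min (k - 1) j \<le> greedy p k c0 (j * p)"
proof (induction j)
  case (Suc j)
  show ?case
  proof (cases "greedy p k c0 (j * p) < k - 1")
    case True
    then show ?thesis using greedy_progress[OF True] Suc by (simp add: add.commute)
  next
    case False
    then show ?thesis using greedy_mono[of "j * p" "Suc j * p" c0] by simp
  qed
qed simp

lemma greedy_final: "c0 < k \<Longrightarrow> (k - 1) * p \<le> t \<Longrightarrow> greedy p k c0 t = k - 1"
  using greedy_reach[of "k - 1" c0] greedy_mono[of "(k - 1) * p" t c0] greedy_lt[of c0 t] by simp

lemma greedy_walk:
  assumes c0: "c0 < k"
  shows "walk k (hard_routes n k) (pos (hard_routes n k) c0 0) (map (greedy p k c0) [0..<N])"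
  unfolding walk_def
proof (intro allI impI)
  fix i assume "i < length (map (greedy p k c0) [0..<N])"
  then have i: "i < N" by simp
  show "map (greedy p k c0) [0..<N] ! i < k \<and>
      pos (hard_routes n k) (map (greedy p k c0) [0..<N] ! i) i =
      (if i = 0 then pos (hard_routes n k) c0 0
       else pos (hard_routes n k) (map (greedy p k c0) [0..<N] ! (i - 1)) i)"
  proof (cases i)
    case (Suc j)
    then show ?thesis using i greedy_lt[OF c0] greedy_step[of c0 j] by (simp del: greedy.simps)
  qed (use i c0 in simp)
qed

(* Left pool vertices are visited by the last carrier at suitable even positions that avoid its
   detours at 0, 2 and p - 2(k - 1). *)
lemma left_pool_hit:
  assumes v: "v < h"
  shows "\<exists>r<p. \<not> detour n k (k - 1) r \<and> euler h r = v"
proof -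
  define r where "r = 2 * h * v + 2 * (if 2 * h * v + 4 = p - 2 * k + 2 then 1 else 2)"
  have "2 * h * (v + 1) \<le> 2 * h * h" using v by (intro mult_le_mono2) simp
  then have hv: "2 * h * v + 2 * h \<le> p" using period_eq by (simp add: algebra_simps)
  have rl: "r < 2 * h * v + 2 * h" "2 * h * v \<le> r"
    using half_ge_3 unfolding r_def by (cases "2 * h * v + 4 = p - 2 * k + 2"; simp)+
  have "r div (2 * h) = v" using rl by (intro div_nat_eqI) (simp_all add: algebra_simps)
  moreover have "even r" unfolding r_def by (metis dvd_add dvd_triv_left mult.assoc)
  ultimately have "euler h r = v" by (simp add: euler_def)
  moreover have "\<not> detour n k (k - 1) r"
  proof
    assume "detour n k (k - 1) r"
    then have "r = 0 \<or> r = 2 \<or> r = p - 2 * (k - 1)" using k2 by (auto simp: detour_def)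
    moreover have "p - 2 * (k - 1) = p - 2 * k + 2" using period_large k2 by simp
    ultimately show False using period_large half_ge_3 by (auto simp: r_def split: if_splits)
  qed
  moreover have "r < p" using rl hv by linarith
  ultimately show ?thesis by blast
qed

(* Right pool vertices are visited at odd positions, which are never detours. *)
lemma right_pool_hit:
  assumes v: "h \<le> v" "v < 2 * h"
  shows "\<exists>r<p. \<not> detour n k (k - 1) r \<and> euler h r = v"
proof -
  let ?r = "2 * (v - h) + 1"
  have r: "?r < 2 * h" using v by linarith
  then have "euler h ?r = v" using v by (simp add: euler_def)
  moreover have "2 * h \<le> p" using half_pos period_eq by simp
  then have "?r < p" using r by linarith
  ultimately show ?thesis using detour_odd k2 by (intro exI[of _ ?r]) auto
qed

lemma last_carrier_covers:
  assumes y: "y < n"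
  shows "\<exists>r<p. hard_site n k (k - 1) r = y"
proof -
  have k1: "k - 1 < k" using k2 by simp
  consider "y < 2 * h" | "y = 2 * h" | "y = 2 * h + 1" | "y = n - 1"
    using y last_site_cases by linarith
  then show ?thesis
  proof cases
    case 1
    define v where "v = (y + 2 * h - (k - 1)) mod (2 * h)"
    have "k - 1 < 2 * h" using k_le_half half_ge_3 by linarith
    then have vy: "(v + (k - 1)) mod (2 * h) = y"
      unfolding v_def using 1 by (simp add: mod_add_left_eq)
    have "v < 2 * h" using half_pos by (simp add: v_def)
    then obtain r where "r < p" "\<not> detour n k (k - 1) r" "euler h r = v"
      using left_pool_hit right_pool_hit by (meson not_le)
    then show ?thesis using pool_site vy by auto
  next
    case 2
    have d: "detour n k (k - 1) (p - 2 * (k - 1))"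
      unfolding detour_def by (rule disjI2, rule disjI2) (use k2 in simp)
    have "10 \<le> p - 2 * (k - 1)" "p - 2 * (k - 1) < p" using period_large k2 by auto
    then show ?thesis using detour_cases[OF k1 d] 2 by (intro exI[of _ "p - 2 * (k - 1)"]) auto
  next
    case 3
    then show ?thesis using period_large by (intro exI[of _ 0]) (auto simp: hard_site_def)
  next
    case 4
    then show ?thesis using period_large by (intro exI[of _ 2]) (auto simp: hard_site_def)
  qed
qed

(* During its last period the greedy walk rides carrier k - 1 and so visits every site. *)
lemma greedy_walk_covers:
  assumes c0: "c0 < k"
  shows "{0..<n} \<subseteq> walk_sites (hard_routes n k) x (map (greedy p k c0) [0..<k * p])"
proof
  fix y assume "y \<in> {0..<n}"
  then obtain r where r: "r < p" "hard_site n k (k - 1) r = y" using last_carrier_covers by auto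
  have kp: "k * p = (k - 1) * p + p" using k2 by (cases k) auto
  define t where "t = (if r = 0 then k * p - 1 else (k - 1) * p + r - 1)"
  have t: "t < k * p" "(k - 1) * p \<le> t" using r kp period_pos by (auto simp: t_def)
  have "t + 1 = (if r = 0 then k * p else r + (k - 1) * p)" using kp period_pos by (simp add: t_def)
  then have "(t + 1) mod p = r" using r by auto
  then have "pos (hard_routes n k) (greedy p k c0 t) (t + 1) = y"
    using greedy_final[OF c0 t(2)] r by (simp add: pos_hard)
  then show "y \<in> walk_sites (hard_routes n k) x (map (greedy p k c0) [0..<k * p])"
    using t unfolding walk_sites_def by force
qed

lemma feasible_hard: "feasible n k (hard_routes n k)"
  unfolding feasible_def start_sites_def
  using greedy_walk greedy_walk_covers by blast

end


section \<open>The lower bound\<close>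

(* The arithmetic behind the final estimate, with h \<ge> (n - 3) / 2 and k - 1 \<ge> k / 2. *)
lemma quadratic_bound:
  fixes K N H :: real
  assumes K: "2 \<le> K" and N: "8 \<le> N" and H: "N - 3 \<le> 2 * H"
  shows "K * N * (N - 8) / 8 < (K - 1) * (2 * H * H - 2) + 1"
proof -
  define Q where "Q = ((N - 3) * (N - 3) - 4) / 2"
  have "(N - 3) * (N - 3) \<le> (2 * H) * (2 * H)" using N H by (intro mult_mono) auto
  also have "\<dots> = 4 * (H * H)" by simp
  finally have pool: "Q \<le> 2 * H * H - 2"
    unfolding Q_def by simp
  have "5 * 5 \<le> (N - 3) * (N - 3)" using N by (intro mult_mono) auto
  then have "0 \<le> Q" unfolding Q_def by simp
  then have "K / 2 * Q \<le> (K - 1) * (2 * H * H - 2)"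
    using K pool by (intro mult_mono) auto
  moreover have "K * N * (N - 8) / 8 < K / 2 * Q + 1"
  proof -
    have "0 < K * ((N - 2) * (N - 2) + 6)"
      using K by (intro mult_pos_pos) (auto intro: add_nonneg_pos)
    then show ?thesis unfolding Q_def by argo
  qed
  ultimately show ?thesis by linarith
qed

context hard_instance begin

abbreviation x0 :: nat where "x0 \<equiv> pos (hard_routes n k) 0 0"

lemma x0_start: "x0 \<in> start_sites k (hard_routes n k)"
  unfolding start_sites_def using k2 by auto

(* Along any realizable walk from x0, carrier c can be ridden only after c (p - 2) moves:
   the walk starts on carrier 0 and can only switch to a neighbour at a hub meeting. *)
lemma walk_progress:
  assumes w: "walk k (hard_routes n k) x0 cs" and i: "i < length cs"
  shows "cs ! i * (p - 2) \<le> i"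
  using i
proof (induction i)
  case 0
  then have c: "cs ! 0 < k" and "pos (hard_routes n k) (cs ! 0) 0 = x0"
    using w unfolding walk_def by auto
  then have e: "hard_site n k (cs ! 0) 0 = hard_site n k 0 0" by (simp add: pos_hard)
  have "cs ! 0 = 0"
  proof (rule ccontr)
    assume "cs ! 0 \<noteq> 0"
    then show False using carriers_meet[OF c _ _ e] period_arith[of 0] k2 by auto
  qed
  then show ?case by simp
next
  case (Suc i)
  let ?c = "cs ! i" and ?d = "cs ! Suc i"
  have IH: "?c * (p - 2) \<le> i" using Suc by simp
  have c: "?c < k" "?d < k"
    and "pos (hard_routes n k) ?d (Suc i) = pos (hard_routes n k) ?c (Suc i)"
    using w Suc.prems unfolding walk_def by auto
  then have e: "hard_site n k ?c ((i + 1) mod p) = hard_site n k ?d ((i + 1) mod p)"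
    by (simp add: pos_hard)
  show ?case
  proof (cases "?d = ?c")
    case False
    from carriers_meet[OF c(1) c(2) False[symmetric] e] show ?thesis
    proof
      assume "?d = ?c + 1 \<and> (i + 1) mod p = p - 2 - 2 * ?c"
      moreover have "2 * ?c + 2 \<le> p" using period_arith[OF c(1)] by linarith
      ultimately show ?thesis using meeting_time_arith[OF IH] by simp
    next
      assume "?c = ?d + 1 \<and> (i + 1) mod p = p - 2 - 2 * ?d"
      then have "?d * (p - 2) \<le> ?c * (p - 2)" by simp
      then show ?thesis using IH by linarith
    qed
  qed (use IH in simp)
qed

lemma x0_in_pool: "x0 < 2 * h"
proof -
  have "\<not> detour n k 0 0" using k2 period_arith[of 0] unfolding detour_def by auto
  then show ?thesis using pool_site_lt by (simp add: pos_hard)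
qed

lemma target_carrier:
  assumes c: "c < k" and e: "hard_site n k c r = 2 * h + 1"
  shows "c = k - 1"
proof -
  have "detour n k c r" using e detour_iff_outside_pool by simp
  then show ?thesis using detour_cases[OF c \<open>detour n k c r\<close>] e by auto
qed

(* Hence every covering walk from x0 must reach carrier k - 1 and is long. *)
lemma covering_walk_long:
  assumes w: "walk k (hard_routes n k) x0 cs"
    and cov: "{0..<n} \<subseteq> walk_sites (hard_routes n k) x0 cs"
  shows "(k - 1) * (p - 2) + 1 \<le> length cs"
proof -
  have "2 * h + 1 \<in> walk_sites (hard_routes n k) x0 cs" using cov last_site_cases n8 by auto
  then obtain i where i: "i < length cs"
    and at: "pos (hard_routes n k) (cs ! i) (i + 1) = 2 * h + 1"
    using x0_in_pool unfolding walk_sites_def by auto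
  have "cs ! i < k" using w i unfolding walk_def by blast
  then have "cs ! i = k - 1" using target_carrier at by (simp add: pos_hard)
  then show ?thesis using walk_progress[OF w i] i by simp
qed

(* With p = 2h\<^sup>2 and 2h \<ge> n - 3 the bound of covering_walk_long exceeds k n (n - 8) / 8. *)
lemma hard_routes_M_large: "1/8 * real k * real n * (real n - 8) < real (M n k (hard_routes n k))"
proof -
  have "(k - 1) * (p - 2) + 1 \<le> M n k (hard_routes n k)"
    using M_lower_bound[OF feasible_hard x0_start covering_walk_long] by blast
  moreover have "2 \<le> p" using period_large by simp
  then have "real (p - 2) = 2 * real h * real h - 2" by (simp add: of_nat_diff period_eq)
  then have "real ((k - 1) * (p - 2) + 1) = (real k - 1) * (2 * real h * real h - 2) + 1"
    using k2 by (simp add: of_nat_diff)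
  ultimately have "(real k - 1) * (2 * real h * real h - 2) + 1 \<le> real (M n k (hard_routes n k))"
    by (metis of_nat_le_iff)
  moreover have "real n - 3 \<le> 2 * real h" using n8 by (simp add: half_def)
  ultimately show ?thesis using quadratic_bound[of "real k" "real n" "real h"] k2 n8 by simp
qed

lemma hard_routes_valid:
  "pv_system n k (hard_routes n k) \<and> simple_pv k (hard_routes n k) \<and>
   homogeneous k (hard_routes n k)"
  using k2 kn period_pos site_lt simple_hard_route
  by (auto simp: pv_system_def simple_pv_def homogeneous_def hard_routes_def)

end


(* For n < 8 the claimed bound is negative, so k carriers sharing the cyclic route
   0, 1, ..., n - 1 suffice. *)
lemma small_instance:
  assumes n: "4 \<le> n" "n < 8" and k: "2 \<le> k" "2 * k \<le> n"
  shows "\<exists>R. pv_system n k R \<and> simple_pv k R \<and> homogeneous k R \<and> feasible n k R \<and>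
           real (M n k R) > 1/8 * real k * real n * (real n - 8)"
proof -
  let ?R = "\<lambda>c::nat. [0..<n]"
  have ps: "pos ?R c t = t mod n" for c t unfolding pos_def using n by simp
  have "simple_route [0..<n]"
    unfolding simple_route_def Let_def using n by (auto simp: mod_Suc)
  then have valid: "pv_system n k ?R \<and> simple_pv k ?R \<and> homogeneous k ?R"
    using n k by (auto simp: pv_system_def simple_pv_def homogeneous_def)
  have st: "start_sites k ?R = {0}"
    unfolding start_sites_def using k ps by (auto intro!: exI[of _ "0::nat"])
  have "walk k ?R 0 (replicate (n - 1) 0)" unfolding walk_def using k ps by auto
  moreover have "{0..<n} \<subseteq> walk_sites ?R 0 (replicate (n - 1) 0)"
  proof
    fix y assume y: "y \<in> {0..<n}"
    show "y \<in> walk_sites ?R 0 (replicate (n - 1) 0)"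
    proof (cases y)
      case (Suc i)
      then have "i < n - 1" "pos ?R 0 (i + 1) = y" using y ps by auto
      then show ?thesis unfolding walk_sites_def by force
    qed (simp add: walk_sites_def)
  qed
  ultimately have "feasible n k ?R" unfolding feasible_def st by blast
  moreover have "1/8 * real k * real n * (real n - 8) < 0" using n k by (simp add: mult_pos_neg)
  ultimately show ?thesis using valid by (intro exI[of _ ?R]) simp
qed


theorem mainTheorem5:
  fixes n k :: nat
  assumes "4 \<le> n" and "2 \<le> k" and "2 * k \<le> n"
  shows "\<exists>R. pv_system n k R \<and> simple_pv k R \<and> homogeneous k R \<and> feasible n k R \<and>
           real (M n k R) > 1/8 * real k * real n * (real n - 8)"
proof (cases "n < 8")
  case True
  then show ?thesis using small_instance assms by blast
next
  case False
  then interpret hard_instance n k using assms by unfold_locales auto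
  show ?thesis using hard_routes_valid feasible_hard hard_routes_M_large by blast
qed

end
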